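(* Let $A$ be a finite set with $q:=|A|\ge 2$ and $n\ge 2$. The alternating group $\mathrm{Alt}(A^n)$ is generated by the instructions that are even permutations of $A^n$, unless $q=2$ and $n\in\{2,3\}$.
   Context: Any $f\in\mathrm{Sym}(A^n)$ is written $f(x)=(f_1(x),\ldots,f_n(x))$ with coordinate functions $f_i:A^n\to A$; the $i$-th coordinate function is trivial if $f_i(x)=x_i$ for all $x$. An instruction is a permutation of $A^n$ with at most one nontrivial coordinate function (the identity counts as an instruction). (The paper phrases the conclusion as: $\mathrm{Alt}(A^n)$ is internally computable, meaning it is generated by $\mathrm{Alt}(A^n)\cap\mathcal{I}$, where $\mathcal{I}$ is the set of instructions.) *)

theory Defs
  imports "HOL-Algebra.Sym_Groups"
begin

definition cube :: "'a set \<Rightarrow> nat \<Rightarrow> (nat \<Rightarrow> 'a) set"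
  where "cube A n = ({..<n} \<rightarrow>\<^sub>E A)"

definition perm_group :: "'b set \<Rightarrow> ('b \<Rightarrow> 'b) monoid"
  where "perm_group X = \<lparr> carrier = {p. p permutes X}, mult = (\<circ>), one = id \<rparr>"

definition Alt :: "'b set \<Rightarrow> ('b \<Rightarrow> 'b) set"
  where "Alt X = {p. p permutes X \<and> evenperm p}"

definition instructions :: "'a set \<Rightarrow> nat \<Rightarrow> ((nat \<Rightarrow> 'a) \<Rightarrow> (nat \<Rightarrow> 'a)) set"
  where "instructions A n =
     {f. f permutes cube A n \<and>
         (\<exists>i. \<forall>j<n. j \<noteq> i \<longrightarrow> (\<forall>x\<in>cube A n. f x j = x j))}"

end

theory Submission
  imports Defs
begin

text \<open>Let H be the group generated by the even instructions. Two points of A^n joined by an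
  edge of the Hamming graph in direction i differ only in coordinate i, so a product of two
  transpositions along direction-i edges is an even instruction and lies in H. Conjugating such
  products by suitable elements of H produces a product of two transpositions along edges of
  different directions that share a point; this needs a third symbol, or, for q = 2, two
  coordinates besides the two directions, which is where the exceptions come from. Chaining
  these, H contains t(a,b) t(p,q) for every edge {a,b} and one fixed edge {p,q}, then for every
  pair a \<noteq> b by induction on Hamming distance, and such products generate Alt(A^n).\<close>

lemma perm_group_group: "group (perm_group X)"
  using permutes_inv permutes_inv_o(2)
  by (auto intro!: groupI simp: perm_group_def permutes_compose permutes_id comp_assoc, blast)

lemma perm_group_inv: "p permutes X \<Longrightarrow> m_inv (perm_group X) p = inv' p"
  by (rule group.inv_equality[OF perm_group_group])
     (auto simp: perm_group_def permutes_inv permutes_inv_o)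

lemma Alt_subgroup:
  assumes "finite X"
  shows "subgroup (Alt X) (perm_group X)"
proof (rule group.subgroupI[OF perm_group_group])
  have perm: "p permutes X \<Longrightarrow> permutation p" for p
    using assms permutation_permutes by blast
  show "a \<in> Alt X \<Longrightarrow> m_inv (perm_group X) a \<in> Alt X" for a
    using perm by (auto simp: Alt_def perm_group_inv permutes_inv evenperm_inv)
  show "a \<in> Alt X \<Longrightarrow> b \<in> Alt X \<Longrightarrow> a \<otimes>\<^bsub>perm_group X\<^esub> b \<in> Alt X" for a b
    using perm by (auto simp: Alt_def perm_group_def permutes_compose evenperm_comp)
qed (auto simp: Alt_def perm_group_def intro!: exI[of _ id])

lemma transpose_comp_transpose_inv:
  "inv' (transpose a b \<circ> transpose c d) = transpose c d \<circ> transpose a b"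
  by (rule inv_unique_comp) (simp_all add: fun_eq_iff)

lemma conj_transpose:
  assumes "bij s"
  shows "s \<circ> transpose a b \<circ> inv' s = transpose (s a) (s b)"
proof (rule ext)
  fix x
  have "s (inv' s x) = x" using assms by (simp add: bij_is_surj surj_f_inv_f)
  moreover have "inv' s x = a \<longleftrightarrow> x = s a" "inv' s x = b \<longleftrightarrow> x = s b"
    using assms by (metis bij_inv_eq_iff)+
  ultimately show "(s \<circ> transpose a b \<circ> inv' s) x = transpose (s a) (s b) x"
    by (auto simp: transpose_def)
qed

locale perm_subgroup =
  fixes X :: "'b set" and H :: "('b \<Rightarrow> 'b) set"
  assumes subgroup: "subgroup H (perm_group X)"
begin

lemma permutes: "p \<in> H \<Longrightarrow> p permutes X"
  using subgroup.subset[OF subgroup] by (auto simp: perm_group_def)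

lemma comp_closed: "p \<in> H \<Longrightarrow> q \<in> H \<Longrightarrow> p \<circ> q \<in> H"
  using subgroup.m_closed[OF subgroup] by (auto simp: perm_group_def)

lemma id_closed: "id \<in> H"
  using subgroup.one_closed[OF subgroup] by (auto simp: perm_group_def)

lemma inv_closed: "p \<in> H \<Longrightarrow> inv' p \<in> H"
  using subgroup.m_inv_closed[OF subgroup] permutes perm_group_inv by metis

lemma double_transpose_swap:
  "transpose a b \<circ> transpose c d \<in> H \<Longrightarrow> transpose c d \<circ> transpose a b \<in> H"
  using inv_closed transpose_comp_transpose_inv by metis

lemma double_transpose_trans:
  assumes "transpose a b \<circ> transpose c d \<in> H" "transpose c d \<circ> transpose e f \<in> H"
  shows "transpose a b \<circ> transpose e f \<in> H"
proof -
  have "transpose a b \<circ> transpose e f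
          = (transpose a b \<circ> transpose c d) \<circ> (transpose c d \<circ> transpose e f)"
    by (simp add: fun_eq_iff)
  then show ?thesis using comp_closed[OF assms] by simp
qed

lemma double_transpose_conj:
  assumes "s \<in> H" "transpose a b \<circ> transpose c d \<in> H"
  shows "transpose (s a) (s b) \<circ> transpose (s c) (s d) \<in> H"
proof -
  have s: "bij s" using permutes[OF assms(1)] permutes_bij by blast
  have "s \<circ> (transpose a b \<circ> transpose c d) \<circ> inv' s \<in> H"
    using assms comp_closed inv_closed by blast
  moreover have "s \<circ> (transpose a b \<circ> transpose c d) \<circ> inv' s
                   = (s \<circ> transpose a b \<circ> inv' s) \<circ> (s \<circ> transpose c d \<circ> inv' s)"
    using s by (simp add: fun_eq_iff bij_is_inj)
  ultimately show ?thesis using conj_transpose[OF s] by simp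
qed

lemma double_transpose_link:
  assumes "s \<in> H" "transpose u v \<circ> transpose x z \<in> H"
    and "s x = y" "s z = z" "s u = u" "s v = v"
    and "x \<noteq> y" "x \<noteq> z" "y \<noteq> z"
  shows "transpose x y \<circ> transpose x z \<in> H"
proof -
  have "transpose u v \<circ> transpose y z \<in> H"
    using double_transpose_conj[OF assms(1,2)] assms(3-6) by simp
  then have "transpose x z \<circ> transpose y z \<in> H"
    using double_transpose_trans double_transpose_swap assms(2) by blast
  moreover have "transpose x y \<circ> transpose x z = transpose x z \<circ> transpose y z"
    using assms(7-9) by (simp add: fun_eq_iff transpose_def)
  ultimately show ?thesis by simp
qed

lemma double_transpose_path:
  assumes "transpose a z \<circ> transpose p q \<in> H" "transpose z b \<circ> transpose p q \<in> H"
    and "a \<noteq> b" "z \<noteq> b"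
  shows "transpose a b \<circ> transpose p q \<in> H"
proof -
  have "transpose a b \<circ> transpose p q
          = (transpose a z \<circ> transpose p q) \<circ> (transpose p q \<circ> transpose z b)
              \<circ> (transpose a z \<circ> transpose p q)"
    using transpose_comp_triple[of a b z] assms(3,4) by (simp add: fun_eq_iff)
  then show ?thesis
    using assms(1,2) comp_closed double_transpose_swap by metis
qed

lemma Alt_subset_if_double_transpositions:
  assumes "finite X" "p \<noteq> q"
    and pairs: "\<And>a b. a \<in> X \<Longrightarrow> b \<in> X \<Longrightarrow> a \<noteq> b \<Longrightarrow> transpose a b \<circ> transpose p q \<in> H"
  shows "Alt X \<subseteq> H"
proof
  let ?t = "transpose p q"
  fix f assume "f \<in> Alt X"
  then have f: "f permutes X" "evenperm f" by (auto simp: Alt_def)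
  \<comment> \<open>Induction along a decomposition into transpositions; odd permutations are
    handled by the fixed correction t(p,q).\<close>
  have "(evenperm f \<longrightarrow> f \<in> H) \<and> (\<not> evenperm f \<longrightarrow> ?t \<circ> f \<in> H)"
    using f(1) assms(1)
  proof (induction rule: permutes_induct)
    case id
    then show ?case by (metis evenperm_id id_closed)
  next
    case (swap a b g)
    have parity: "evenperm (transpose a b \<circ> g) \<longleftrightarrow> \<not> evenperm g"
      using swap assms(1) permutation_permutes[of g]
      by (auto simp: evenperm_comp permutation_swap_id evenperm_swap)
    have ab: "transpose a b \<circ> ?t \<in> H" "?t \<circ> transpose a b \<in> H"
      using pairs double_transpose_swap swap by blast+
    show ?case
    proof (cases "evenperm g")
      case True
      then have "(?t \<circ> transpose a b) \<circ> g \<in> H" using swap ab comp_closed by blast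
      then have "?t \<circ> (transpose a b \<circ> g) \<in> H" by (simp only: comp_assoc)
      then show ?thesis using parity True unfolding comp_def by blast
    next
      case False
      then have "(transpose a b \<circ> ?t) \<circ> (?t \<circ> g) \<in> H" using swap ab comp_closed by blast
      moreover have "(transpose a b \<circ> ?t) \<circ> (?t \<circ> g) = transpose a b \<circ> g"
        by (simp add: fun_eq_iff)
      ultimately show ?thesis using parity False unfolding comp_def by simp
    qed
  qed
  then show "f \<in> H" using f by blast
qed

end

lemma finite_cube: "finite A \<Longrightarrow> finite (cube A n)"
  unfolding cube_def by (simp add: finite_PiE)

lemma cube_upd: "x \<in> cube A n \<Longrightarrow> k < n \<Longrightarrow> v \<in> A \<Longrightarrow> x(k := v) \<in> cube A n"
  unfolding cube_def by (auto simp: PiE_iff extensional_def)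

lemma cube_neq_coord:
  assumes "a \<in> cube A n" "b \<in> cube A n" "a \<noteq> b"
  shows "\<exists>k<n. a k \<noteq> b k"
proof (rule ccontr)
  assume "\<not> ?thesis"
  then have "a = b" using assms(1,2) unfolding cube_def by (metis PiE_arb lessThan_iff ext)
  then show False using assms(3) by simp
qed

lemma const_in_cube: "a \<in> A \<Longrightarrow> restrict (\<lambda>_. a) {..<n} \<in> cube A n"
  unfolding cube_def by simp

locale cube_instructions =
  fixes A :: "'a set" and n :: nat
  assumes finite_A: "finite A"
begin

abbreviation "X \<equiv> cube A n"

definition H :: "((nat \<Rightarrow> 'a) \<Rightarrow> (nat \<Rightarrow> 'a)) set"
  where "H = generate (perm_group X) (Alt X \<inter> instructions A n)"

lemma H_subgroup: "subgroup H (perm_group X)"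
  unfolding H_def
  by (rule group.generate_is_subgroup[OF perm_group_group]) (auto simp: perm_group_def Alt_def)

sublocale perm_subgroup X H
  by (rule perm_subgroup.intro) (rule H_subgroup)

lemma H_subset_Alt: "H \<subseteq> Alt X"
  unfolding H_def
  by (rule group.generate_subgroup_incl[OF perm_group_group])
     (auto intro: Alt_subgroup finite_cube finite_A)

definition edge :: "nat \<Rightarrow> (nat \<Rightarrow> 'a) \<Rightarrow> (nat \<Rightarrow> 'a) \<Rightarrow> bool"
  where "edge i a b \<longleftrightarrow> a \<in> X \<and> b \<in> X \<and> a \<noteq> b \<and> (\<forall>j<n. j \<noteq> i \<longrightarrow> a j = b j)"

lemma edge_upd: "x \<in> X \<Longrightarrow> i < n \<Longrightarrow> v \<in> A \<Longrightarrow> x i \<noteq> v \<Longrightarrow> edge i x (x(i := v))"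
  unfolding edge_def using cube_upd by (auto simp: fun_eq_iff)

lemma edge_coord: "edge i a b \<Longrightarrow> i < n \<and> a i \<noteq> b i"
  unfolding edge_def using cube_neq_coord by blast

lemma edge_transpose_coord: "edge i a b \<Longrightarrow> j < n \<Longrightarrow> j \<noteq> i \<Longrightarrow> transpose a b x j = x j"
  unfolding edge_def transpose_def by auto

lemma parallel_edges_in_H:
  assumes "edge i a b" "edge i c d"
  shows "transpose a b \<circ> transpose c d \<in> H"
proof -
  have "transpose a b \<circ> transpose c d permutes X"
    using assms by (auto simp: edge_def intro!: permutes_compose permutes_swap_id)
  moreover have "evenperm (transpose a b \<circ> transpose c d)"
    using assms by (simp add: evenperm_comp permutation_swap_id evenperm_swap edge_def)
  moreover have "\<forall>x\<in>X. \<forall>j<n. j \<noteq> i \<longrightarrow> (transpose a b \<circ> transpose c d) x j = x j"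
    using assms edge_transpose_coord by simp
  ultimately have "transpose a b \<circ> transpose c d \<in> Alt X \<inter> instructions A n"
    unfolding Alt_def instructions_def by blast
  then show ?thesis unfolding H_def by (rule generate.incl)
qed

lemma crossing_edges_in_H:
  assumes "s \<in> H" "edge i x y" "edge 0 x z" "edge 0 u v" "i \<noteq> 0"
    and "s x = y" "s z = z" "s u = u" "s v = v"
  shows "transpose x y \<circ> transpose x z \<in> H"
proof (rule double_transpose_link[OF assms(1) _ assms(6-9)])
  show "transpose u v \<circ> transpose x z \<in> H"
    using assms(3,4) parallel_edges_in_H by blast
  have "y i \<noteq> z i"
    using edge_coord[OF assms(2)] assms(3,5) unfolding edge_def by auto
  then show "x \<noteq> y" "x \<noteq> z" "y \<noteq> z"
    using assms(2,3) by (auto simp: edge_def)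
qed

lemma edge_exists:
  assumes "2 \<le> card A" "i < n"
  shows "\<exists>p q. edge i p q"
proof -
  obtain a0 a1 where "a0 \<in> A" "a1 \<in> A" "a0 \<noteq> a1"
    using assms(1) obtain_subset_with_card_n[of 2 A] by (metis card_2_iff insert_subset)
  then show ?thesis
    using edge_upd[OF const_in_cube assms(2)] assms(2) by fastforce
qed

lemma crossing_edges_three_symbols:
  assumes a: "a0 \<in> A" "a1 \<in> A" "a2 \<in> A" "a0 \<noteq> a1" "a0 \<noteq> a2" "a1 \<noteq> a2"
    and i: "0 < i" "i < n"
  shows "\<exists>x y z. edge i x y \<and> edge 0 x z \<and> transpose x y \<circ> transpose x z \<in> H"
proof -
  define x where "x = restrict (\<lambda>_. a0) {..<n}"
  define y where "y = x(i := a1)"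
  define y' where "y' = x(i := a2)"
  define z where "z = x(0 := a1)"
  define v where "v = z(0 := a2)"
  have "x \<in> X" using const_in_cube a(1) by (simp add: x_def)
  then have edges: "edge i x y" "edge i x y'" "edge 0 x z"
    using edge_upd a i unfolding x_def y_def y'_def z_def by auto
  moreover have "z \<in> X" "z 0 = a1" using edges(3) by (auto simp: edge_def z_def)
  ultimately have "edge 0 z v"
    using edge_upd[of z 0 a2] a i unfolding v_def by simp
  \<comment> \<open>A 3-cycle on the direction-i line through x, sending x to y and fixing z and v.\<close>
  define s where "s = transpose x y' \<circ> transpose x y"
  have "s \<in> H" unfolding s_def using edges parallel_edges_in_H by blast
  have coords: "x i = a0" "y i = a1" "y' i = a2" "x 0 = a0" "y 0 = a0" "y' 0 = a0"
    "z 0 = a1" "v 0 = a2"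
    using i by (auto simp: x_def y_def y'_def z_def v_def)
  then have "s x = y" "s z = z" "s v = v"
    using a by (auto simp: s_def transpose_def)
  then have "transpose x y \<circ> transpose x z \<in> H"
    using crossing_edges_in_H[OF \<open>s \<in> H\<close> edges(1,3) \<open>edge 0 z v\<close>] i by simp
  then show ?thesis using edges by blast
qed

lemma crossing_edges_four_coords:
  assumes a: "a0 \<in> A" "a1 \<in> A" "a0 \<noteq> a1"
    and i: "0 < i" "i < n" and "4 \<le> n"
  shows "\<exists>x y z. edge i x y \<and> edge 0 x z \<and> transpose x y \<circ> transpose x z \<in> H"
proof -
  define k :: nat where "k = (if i = 1 then 2 else 1)"
  define l :: nat where "l = (if i = 3 then 2 else 3)"
  have kl: "k < n" "l < n" "k \<noteq> 0" "l \<noteq> 0" "k \<noteq> i" "l \<noteq> i" "k \<noteq> l"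
    using \<open>4 \<le> n\<close> by (auto simp: k_def l_def)
  define x where "x = restrict (\<lambda>_. a0) {..<n}"
  define y where "y = x(i := a1)"
  define z where "z = x(0 := a1)"
  define p where "p = x(k := a1)"
  define p' where "p' = p(i := a1)"
  define u where "u = x(l := a1)"
  define v where "v = u(0 := a1)"
  have "x \<in> X" using const_in_cube a(1) by (simp add: x_def)
  then have "p \<in> X" "u \<in> X" unfolding p_def u_def using cube_upd a kl by auto
  then have edges: "edge i x y" "edge 0 x z" "edge i p p'" "edge 0 u v"
    using edge_upd \<open>x \<in> X\<close> a i kl
    by (auto simp: x_def y_def z_def p_def p'_def u_def v_def)
  \<comment> \<open>Moving x to y is made even by a parallel transposition at p, which is displaced
    from x in coordinate k, while the edge {u, v} is displaced in coordinate l.\<close>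
  define s where "s = transpose x y \<circ> transpose p p'"
  have "s \<in> H" unfolding s_def using edges parallel_edges_in_H by blast
  have coords: "x 0 = a0" "x i = a0" "x k = a0" "x l = a0"
    "y 0 = a0" "y i = a1" "y k = a0" "y l = a0"
    "z 0 = a1" "z i = a0" "z k = a0" "z l = a0"
    "p 0 = a0" "p i = a0" "p k = a1" "p l = a0"
    "p' 0 = a0" "p' i = a1" "p' k = a1" "p' l = a0"
    "u i = a0" "u l = a1" "v i = a0" "v l = a1"
    using i kl by (auto simp: x_def y_def z_def p_def p'_def u_def v_def)
  then have "s x = y" "s z = z" "s u = u" "s v = v"
    using a by (auto simp: s_def transpose_def)
  then have "transpose x y \<circ> transpose x z \<in> H"
    using crossing_edges_in_H[OF \<open>s \<in> H\<close> edges(1,2,4)] i by simp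
  then show ?thesis using edges by blast
qed

lemma crossing_edges:
  assumes "2 \<le> card A" "3 \<le> card A \<or> 4 \<le> n" "0 < i" "i < n"
  shows "\<exists>x y z. edge i x y \<and> edge 0 x z \<and> transpose x y \<circ> transpose x z \<in> H"
proof (cases "3 \<le> card A")
  case True
  then obtain a0 a1 a2 where "a0 \<in> A" "a1 \<in> A" "a2 \<in> A" "a0 \<noteq> a1" "a0 \<noteq> a2" "a1 \<noteq> a2"
    using obtain_subset_with_card_n[of 3 A] by (metis card_3_iff insert_subset)
  then show ?thesis using crossing_edges_three_symbols assms(3,4) by blast
next
  case False
  obtain a0 a1 where "a0 \<in> A" "a1 \<in> A" "a0 \<noteq> a1"
    using assms(1) obtain_subset_with_card_n[of 2 A] by (metis card_2_iff insert_subset)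
  then show ?thesis using crossing_edges_four_coords False assms by blast
qed

lemma edge_pair_in_H:
  assumes "2 \<le> card A" "3 \<le> card A \<or> 4 \<le> n" "edge 0 p q" "edge i a b"
  shows "transpose a b \<circ> transpose p q \<in> H"
proof (cases "i = 0")
  case True
  then show ?thesis using assms(3,4) parallel_edges_in_H by blast
next
  case False
  then obtain x y z where xyz: "edge i x y" "edge 0 x z" "transpose x y \<circ> transpose x z \<in> H"
    using crossing_edges[OF assms(1,2)] edge_coord[OF assms(4)] by blast
  have "transpose a b \<circ> transpose x y \<in> H" "transpose x z \<circ> transpose p q \<in> H"
    using xyz(1,2) assms(3,4) parallel_edges_in_H by blast+
  then show ?thesis using xyz(3) double_transpose_trans by blast
qed

lemma cube_pair_in_H:
  assumes edges: "\<And>i a b. edge i a b \<Longrightarrow> transpose a b \<circ> transpose p q \<in> H"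
  shows "a \<in> X \<Longrightarrow> b \<in> X \<Longrightarrow> a \<noteq> b \<Longrightarrow> transpose a b \<circ> transpose p q \<in> H"
proof (induction "card {k. k < n \<and> a k \<noteq> b k}" arbitrary: a rule: less_induct)
  case less
  obtain k where k: "k < n" "a k \<noteq> b k" using cube_neq_coord less.prems by blast
  define z where "z = a(k := b k)"
  have "b k \<in> A" using less.prems(2) k unfolding cube_def by auto
  then have az: "edge k a z" unfolding z_def using edge_upd less.prems k by blast
  show ?case
  proof (cases "z = b")
    case True
    then show ?thesis using edges az by blast
  next
    case False
    have "{j. j < n \<and> z j \<noteq> b j} \<subset> {j. j < n \<and> a j \<noteq> b j}"
      using k unfolding z_def by auto
    then have "card {j. j < n \<and> z j \<noteq> b j} < card {j. j < n \<and> a j \<noteq> b j}"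
      by (simp add: psubset_card_mono)
    moreover have "z \<in> X" using az by (simp add: edge_def)
    ultimately have "transpose z b \<circ> transpose p q \<in> H"
      using less.hyps less.prems(2) False by blast
    then show ?thesis
      using double_transpose_path edges[OF az] less.prems(3) False by blast
  qed
qed

lemma Alt_cube_subset_H:
  assumes "2 \<le> card A" "3 \<le> card A \<or> 4 \<le> n" "0 < n"
  shows "Alt X \<subseteq> H"
proof -
  obtain p q where pq: "edge 0 p q" using edge_exists assms(1,3) by blast
  show ?thesis
  proof (rule Alt_subset_if_double_transpositions[OF finite_cube[OF finite_A]])
    show "p \<noteq> q" using pq by (simp add: edge_def)
    show "transpose a b \<circ> transpose p q \<in> H" if "a \<in> X" "b \<in> X" "a \<noteq> b" for a b
      using cube_pair_in_H[OF edge_pair_in_H[OF assms(1,2) pq] that] .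
  qed
qed

end

theorem proposition2:
  fixes A :: "'a set" and n :: nat
  assumes "finite A" and "card A \<ge> 2" and "n \<ge> 2"
    and "\<not> (card A = 2 \<and> n \<in> {2, 3})"
  shows "generate (perm_group (cube A n)) (Alt (cube A n) \<inter> instructions A n)
           = Alt (cube A n)"
proof -
  interpret cube_instructions A n using assms(1) by unfold_locales
  have "3 \<le> card A \<or> 4 \<le> n" using assms(2-4) by auto
  then have "Alt (cube A n) \<subseteq> H" using Alt_cube_subset_H assms(2,3) by simp
  then show ?thesis using H_subset_Alt unfolding H_def by blast
qed

end
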